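(* Let $M=M_1\oplus M_2$ be a right $R$-module which is a duo module (or a distributive module). Then $M$ is principally Goldie*-lifting if and only if both $M_1$ and $M_2$ are principally Goldie*-lifting.
   Context: $R$ is an associative ring with identity; modules are unital right $R$-modules. A submodule $N$ of $M$ is fully invariant if $f(N)\subseteq N$ for every $f\in\mathrm{End}(M)$; $M$ is a duo module if every submodule is fully invariant. $M$ is distributive if for all submodules $A,B,C$, $A+(B\cap C)=(A+B)\cap(A+C)$ (equivalently $A\cap(B+C)=(A\cap B)+(A\cap C)$). $K\ll N$ means $K$ is small in $N$. For submodules $X,Y$ of a module $N$, $X\,\beta^*\,Y$ in $N$ means $(X+Y)/X\ll N/X$ and $(X+Y)/Y\ll N/Y$. A module $N$ is principally Goldie*-lifting if for every cyclic submodule $X$ of $N$ there is a direct summand $D$ of $N$ with $X\,\beta^*\,D$ in $N$. *)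

theory Defs
  imports "HOL-Algebra.Algebra"
begin

(* We reuse the HOL-Algebra record type ('a,'m) module; the field smult r x
   is read as the right action  x . r . (HOL-Algebra's locale "module" requires
   a commutative ring, hence we state the axioms ourselves.) *)
definition rmodule :: "('a, 'c) ring_scheme \<Rightarrow> ('a, 'm) module \<Rightarrow> bool" where
  "rmodule R M \<longleftrightarrow> ring R \<and> abelian_group M \<and>
     (\<forall>r\<in>carrier R. \<forall>x\<in>carrier M. smult M r x \<in> carrier M) \<and>
     (\<forall>r\<in>carrier R. \<forall>x\<in>carrier M. \<forall>y\<in>carrier M.
         smult M r (x \<oplus>\<^bsub>M\<^esub> y) = smult M r x \<oplus>\<^bsub>M\<^esub> smult M r y) \<and>
     (\<forall>r\<in>carrier R. \<forall>s\<in>carrier R. \<forall>x\<in>carrier M.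
         smult M (r \<oplus>\<^bsub>R\<^esub> s) x = smult M r x \<oplus>\<^bsub>M\<^esub> smult M s x) \<and>
     (\<forall>r\<in>carrier R. \<forall>s\<in>carrier R. \<forall>x\<in>carrier M.
         smult M (r \<otimes>\<^bsub>R\<^esub> s) x = smult M s (smult M r x)) \<and>
     (\<forall>x\<in>carrier M. smult M \<one>\<^bsub>R\<^esub> x = x)"

definition submod :: "('a, 'c) ring_scheme \<Rightarrow> ('a, 'm) module \<Rightarrow> 'm set \<Rightarrow> bool" where
  "submod R N K \<longleftrightarrow> K \<subseteq> carrier N \<and> \<zero>\<^bsub>N\<^esub> \<in> K \<and>
     (\<forall>x\<in>K. \<forall>y\<in>K. x \<oplus>\<^bsub>N\<^esub> y \<in> K) \<and>
     (\<forall>x\<in>K. \<ominus>\<^bsub>N\<^esub> x \<in> K) \<and>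
     (\<forall>r\<in>carrier R. \<forall>x\<in>K. smult N r x \<in> K)"

abbreviation submodule_as_module :: "('a, 'm) module \<Rightarrow> 'm set \<Rightarrow> ('a, 'm) module" where
  "submodule_as_module M N \<equiv> M\<lparr>carrier := N\<rparr>"

definition End_mod :: "('a, 'c) ring_scheme \<Rightarrow> ('a, 'm) module \<Rightarrow> ('m \<Rightarrow> 'm) set" where
  "End_mod R M = {f. (\<forall>x\<in>carrier M. f x \<in> carrier M) \<and>
     (\<forall>x\<in>carrier M. \<forall>y\<in>carrier M. f (x \<oplus>\<^bsub>M\<^esub> y) = f x \<oplus>\<^bsub>M\<^esub> f y) \<and>
     (\<forall>r\<in>carrier R. \<forall>x\<in>carrier M. f (smult M r x) = smult M r (f x))}"

definition fully_invariant :: "('a, 'c) ring_scheme \<Rightarrow> ('a, 'm) module \<Rightarrow> 'm set \<Rightarrow> bool" where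
  "fully_invariant R M N \<longleftrightarrow> submod R M N \<and> (\<forall>f\<in>End_mod R M. f ` N \<subseteq> N)"

definition duo_module :: "('a, 'c) ring_scheme \<Rightarrow> ('a, 'm) module \<Rightarrow> bool" where
  "duo_module R M \<longleftrightarrow> (\<forall>N. submod R M N \<longrightarrow> fully_invariant R M N)"

definition distributive_module :: "('a, 'c) ring_scheme \<Rightarrow> ('a, 'm) module \<Rightarrow> bool" where
  "distributive_module R M \<longleftrightarrow> (\<forall>A B C. submod R M A \<longrightarrow> submod R M B \<longrightarrow> submod R M C \<longrightarrow>
      A <+>\<^bsub>M\<^esub> (B \<inter> C) = (A <+>\<^bsub>M\<^esub> B) \<inter> (A <+>\<^bsub>M\<^esub> C))"

definition small_in :: "('a, 'c) ring_scheme \<Rightarrow> ('a, 'm) module \<Rightarrow> 'm set \<Rightarrow> bool" where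
  "small_in R N K \<longleftrightarrow> submod R N K \<and>
     (\<forall>L. submod R N L \<longrightarrow> K <+>\<^bsub>N\<^esub> L = carrier N \<longrightarrow> L = carrier N)"

(* the quotient module N/A: carrier = cosets A +> a; (A +> a) . r = A +> (a . r) *)
definition quot_mod :: "('a, 'm) module \<Rightarrow> 'm set \<Rightarrow> ('a, 'm set) module" where
  "quot_mod N A = \<lparr> carrier = A_RCOSETS N A,
                    monoid.mult = undefined, one = undefined,
                    ring.zero = A, add = set_add N,
                    smult = (\<lambda>r C. set_add N A (smult N r ` C)) \<rparr>"

definition quot_image :: "('a, 'm) module \<Rightarrow> 'm set \<Rightarrow> 'm set \<Rightarrow> 'm set set" where
  "quot_image N A K = (\<lambda>a. a_r_coset N A a) ` K"

definition beta_star :: "('a, 'c) ring_scheme \<Rightarrow> ('a, 'm) module \<Rightarrow> 'm set \<Rightarrow> 'm set \<Rightarrow> bool" where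
  "beta_star R N A B \<longleftrightarrow>
     small_in R (quot_mod N A) (quot_image N A (A <+>\<^bsub>N\<^esub> B)) \<and>
     small_in R (quot_mod N B) (quot_image N B (A <+>\<^bsub>N\<^esub> B))"

definition direct_summand :: "('a, 'c) ring_scheme \<Rightarrow> ('a, 'm) module \<Rightarrow> 'm set \<Rightarrow> bool" where
  "direct_summand R N D \<longleftrightarrow> submod R N D \<and>
     (\<exists>D'. submod R N D' \<and> D <+>\<^bsub>N\<^esub> D' = carrier N \<and> D \<inter> D' = {\<zero>\<^bsub>N\<^esub>})"

definition cyclic_sub :: "('a, 'c) ring_scheme \<Rightarrow> ('a, 'm) module \<Rightarrow> 'm \<Rightarrow> 'm set" where
  "cyclic_sub R N x = {smult N r x | r. r \<in> carrier R}"

definition principally_goldie_star_lifting :: "('a, 'c) ring_scheme \<Rightarrow> ('a, 'm) module \<Rightarrow> bool" where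
  "principally_goldie_star_lifting R N \<longleftrightarrow>
     (\<forall>x\<in>carrier N. \<exists>D. direct_summand R N D \<and> beta_star R N (cyclic_sub R N x) D)"

end

theory Submission
  imports Defs
begin

(* The smallness conditions in the definition of beta* are first traded for supplements:
   for submodules A <= S of N, S/A is small in N/A iff every K with S + K = N also satisfies
   A + K = N (small_quot_iff).  Hence X beta* Y iff X and Y have the same supplements
   (beta_star_iff), and likewise inside a submodule S with supplements taken in S
   (beta_star_restrict_iff).

   Next, for an internal direct sum M = M1 (+) M2 along which every submodule N splits as
   N = (N n M1) + (N n M2) -- true in duo modules, where the projection onto M1 is an
   endomorphism (duo_splits), and in distributive modules (distributive_splits) --
   supplements, cyclic submodules and direct summands are computed componentwise
   (supplement_split, supplement_part, cyclic_split, direct_summand_part,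
   direct_summand_sum). *)

no_notation Sum_Type.Plus (infixr \<open><+>\<close> 65)

lemma set_add_mem: "x \<in> A <+>\<^bsub>G\<^esub> B \<longleftrightarrow> (\<exists>a\<in>A. \<exists>b\<in>B. x = a \<oplus>\<^bsub>G\<^esub> b)"
  by (auto simp: set_add_def set_mult_def)

lemma set_add_memI [intro]: "a \<in> A \<Longrightarrow> b \<in> B \<Longrightarrow> a \<oplus>\<^bsub>G\<^esub> b \<in> A <+>\<^bsub>G\<^esub> B"
  by (auto simp: set_add_mem)

lemma set_add_mono: "A \<subseteq> A' \<Longrightarrow> B \<subseteq> B' \<Longrightarrow> A <+>\<^bsub>G\<^esub> B \<subseteq> A' <+>\<^bsub>G\<^esub> B'"
  unfolding set_add_def set_mult_def by blast

lemma set_add_restrict: "A <+>\<^bsub>G\<lparr>carrier := S\<rparr>\<^esub> B = A <+>\<^bsub>G\<^esub> B"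
  by (simp add: set_add_def set_mult_def)

lemma cyclic_sub_restrict: "cyclic_sub R (N\<lparr>carrier := S\<rparr>) x = cyclic_sub R N x"
  by (simp add: cyclic_sub_def)

lemma submodD:
  assumes "submod R N K"
  shows "K \<subseteq> carrier N" "\<zero>\<^bsub>N\<^esub> \<in> K"
    "\<And>x y. x \<in> K \<Longrightarrow> y \<in> K \<Longrightarrow> x \<oplus>\<^bsub>N\<^esub> y \<in> K"
    "\<And>x. x \<in> K \<Longrightarrow> \<ominus>\<^bsub>N\<^esub> x \<in> K"
    "\<And>r x. r \<in> carrier R \<Longrightarrow> x \<in> K \<Longrightarrow> r \<odot>\<^bsub>N\<^esub> x \<in> K"
  using assms unfolding submod_def by auto

lemma submod_Int: "submod R N A \<Longrightarrow> submod R N B \<Longrightarrow> submod R N (A \<inter> B)"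
  unfolding submod_def by auto

text \<open>The ambient setting: a right module \<open>N\<close> over a ring \<open>R\<close>, with the action written \<open>r \<odot> x\<close>
  (standing for \<open>x\<cdot>r\<close>).\<close>
locale right_module =
  fixes R :: "('a, 'c) ring_scheme" and N :: "('a, 'm) module" (structure)
  assumes rmodule: "rmodule R N"
begin

sublocale abelian_group N
  using rmodule unfolding rmodule_def by blast

sublocale R: ring R
  using rmodule unfolding rmodule_def by blast

lemma smult_closed [simp]: "r \<in> carrier R \<Longrightarrow> x \<in> carrier N \<Longrightarrow> r \<odot> x \<in> carrier N"
  and smult_add_right: "r \<in> carrier R \<Longrightarrow> x \<in> carrier N \<Longrightarrow> y \<in> carrier N \<Longrightarrow>
      r \<odot> (x \<oplus> y) = r \<odot> x \<oplus> r \<odot> y"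
  and smult_add_left: "r \<in> carrier R \<Longrightarrow> s \<in> carrier R \<Longrightarrow> x \<in> carrier N \<Longrightarrow>
      (r \<oplus>\<^bsub>R\<^esub> s) \<odot> x = r \<odot> x \<oplus> s \<odot> x"
  and smult_assoc: "r \<in> carrier R \<Longrightarrow> s \<in> carrier R \<Longrightarrow> x \<in> carrier N \<Longrightarrow>
      (r \<otimes>\<^bsub>R\<^esub> s) \<odot> x = s \<odot> (r \<odot> x)"
  and smult_one [simp]: "x \<in> carrier N \<Longrightarrow> \<one>\<^bsub>R\<^esub> \<odot> x = x"
  using rmodule unfolding rmodule_def by blast+

lemma smult_zero: "x \<in> carrier N \<Longrightarrow> \<zero>\<^bsub>R\<^esub> \<odot> x = \<zero>"
proof -
  assume x: "x \<in> carrier N"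
  have "\<zero>\<^bsub>R\<^esub> \<odot> x \<oplus> \<zero>\<^bsub>R\<^esub> \<odot> x = \<zero>\<^bsub>R\<^esub> \<odot> x"
    using smult_add_left[of "\<zero>\<^bsub>R\<^esub>" "\<zero>\<^bsub>R\<^esub>" x] x by simp
  then show ?thesis using x by simp
qed

lemma smult_neg: "r \<in> carrier R \<Longrightarrow> x \<in> carrier N \<Longrightarrow> (\<ominus>\<^bsub>R\<^esub> r) \<odot> x = \<ominus> (r \<odot> x)"
  using smult_add_left[of "\<ominus>\<^bsub>R\<^esub> r" r x] smult_zero[of x]
  by (simp add: R.l_neg minus_equality)

lemma submod_abelian_subgroup: "submod R N A \<Longrightarrow> abelian_subgroup A N"
  by (intro abelian_subgroupI3 additive_subgroupI add.subgroupI abelian_group_axioms)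
     (auto dest: submodD)

lemma submod_set_add:
  assumes A: "submod R N A" and B: "submod R N B"
  shows "submod R N (A <+> B)"
proof -
  have AC: "A \<subseteq> carrier N" and BC: "B \<subseteq> carrier N" using submodD(1) A B by auto
  have "A <+> B \<subseteq> carrier N" using AC BC by (rule set_add_closed)
  moreover have "\<zero> \<in> A <+> B"
    using set_add_memI[OF submodD(2)[OF A] submodD(2)[OF B], where G = N] by simp
  moreover have "x \<oplus> y \<in> A <+> B" if xy: "x \<in> A <+> B" "y \<in> A <+> B" for x y
  proof -
    obtain a b a' b' where "a \<in> A" "b \<in> B" "x = a \<oplus> b" "a' \<in> A" "b' \<in> B" "y = a' \<oplus> b'"
      using xy by (auto simp: set_add_mem)
    moreover from this have "x \<oplus> y = (a \<oplus> a') \<oplus> (b \<oplus> b')"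
      using AC BC by (simp add: subset_iff a_ac)
    ultimately show ?thesis using A B by (auto dest: submodD(3))
  qed
  moreover have "\<ominus> x \<in> A <+> B" if x: "x \<in> A <+> B" for x
  proof -
    obtain a b where "a \<in> A" "b \<in> B" "x = a \<oplus> b"
      using x by (auto simp: set_add_mem)
    moreover from this have "\<ominus> x = \<ominus> a \<oplus> \<ominus> b"
      using AC BC by (simp add: subset_iff minus_add)
    ultimately show ?thesis using A B by (auto dest: submodD(4))
  qed
  moreover have "r \<odot> x \<in> A <+> B" if r: "r \<in> carrier R" and x: "x \<in> A <+> B" for r x
  proof -
    obtain a b where "a \<in> A" "b \<in> B" "x = a \<oplus> b"
      using x by (auto simp: set_add_mem)
    moreover from this have "r \<odot> x = r \<odot> a \<oplus> r \<odot> b"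
      using AC BC r by (simp add: subset_iff smult_add_right)
    ultimately show ?thesis using A B r by (auto dest: submodD(5))
  qed
  ultimately show ?thesis unfolding submod_def by blast
qed

lemma set_add_assoc:
  "A \<subseteq> carrier N \<Longrightarrow> B \<subseteq> carrier N \<Longrightarrow> C \<subseteq> carrier N \<Longrightarrow>
   (A <+> B) <+> C = A <+> (B <+> C)"
  unfolding set_add_def by (rule add.set_mult_assoc)

lemma set_add_commute: "A \<subseteq> carrier N \<Longrightarrow> B \<subseteq> carrier N \<Longrightarrow> A <+> B = B <+> A"
  by (auto simp: set_add_mem) (metis a_comm subsetD)+

lemma set_add_interchange:
  assumes "A \<subseteq> carrier N" "B \<subseteq> carrier N" "C \<subseteq> carrier N" "D \<subseteq> carrier N"
  shows "(A <+> B) <+> (C <+> D) = (A <+> C) <+> (B <+> D)"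
  using assms
  by (simp add: set_add_assoc set_add_closed set_add_commute[of B] flip: set_add_assoc[of B])

lemma set_add_absorb:
  assumes B: "submod R N B" and "A \<subseteq> B" "\<zero> \<in> A"
  shows "A <+> B = B"
proof
  show "A <+> B \<subseteq> B"
    using assms by (auto simp: set_add_mem intro!: submodD(3)[OF B])
  show "B \<subseteq> A <+> B"
  proof
    fix b assume "b \<in> B"
    then have "b = \<zero> \<oplus> b" using submodD(1)[OF B] by auto
    then show "b \<in> A <+> B" using \<open>b \<in> B\<close> \<open>\<zero> \<in> A\<close> by (auto simp: set_add_mem)
  qed
qed

lemma subset_set_add: "submod R N B \<Longrightarrow> A \<subseteq> carrier N \<Longrightarrow> A \<subseteq> A <+> B"
  by (force simp: set_add_mem dest: submodD(2))

lemma set_add_subset: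
  assumes C: "submod R N C" and "A \<subseteq> C" "B \<subseteq> C"
  shows "A <+> B \<subseteq> C"
  using assms by (auto simp: set_add_mem intro!: submodD(3)[OF C])

lemma quot_mod_simps:
  "carrier (quot_mod N A) = a_rcosets A"
  "(\<oplus>\<^bsub>quot_mod N A\<^esub>) = set_add N"
  "\<zero>\<^bsub>quot_mod N A\<^esub> = A"
  "r \<odot>\<^bsub>quot_mod N A\<^esub> C = A <+> smult N r ` C"
  by (simp_all add: quot_mod_def)

lemma quot_carrier_iff: "C \<in> carrier (quot_mod N A) \<longleftrightarrow> (\<exists>c\<in>carrier N. C = A +> c)"
  by (auto simp: quot_mod_simps A_RCOSETS_def')

lemma quot_image_carrier: "K \<subseteq> carrier N \<Longrightarrow> quot_image N A K \<subseteq> carrier (quot_mod N A)"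
  by (force simp: quot_image_def quot_carrier_iff)

lemma rcos_mem: "x \<in> A +> a \<longleftrightarrow> (\<exists>h\<in>A. x = h \<oplus> a)"
  by (auto simp: a_r_coset_def r_coset_def)

lemma quot_neg:
  assumes A: "submod R N A" and a: "a \<in> carrier N"
  shows "\<ominus>\<^bsub>quot_mod N A\<^esub> (A +> a) = A +> \<ominus> a"
proof -
  interpret abelian_subgroup A N using submod_abelian_subgroup[OF A] .
  have "\<ominus>\<^bsub>quot_mod N A\<^esub> (A +> a) = inv\<^bsub>N A_Mod A\<^esub> (A +> a)"
    by (simp add: a_inv_def m_inv_def A_FactGroup_def FactGroup_def quot_mod_def
                  A_RCOSETS_def set_add_def)
  moreover have "A +> a \<in> carrier (N A_Mod A)"
    using a by (simp add: A_FactGroup_def' a_rcosetsI a_subset)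
  ultimately show ?thesis
    using a by (simp add: a_inv_FactGroup a_rcos_inv)
qed

lemma quot_smult:
  assumes A: "submod R N A" and r: "r \<in> carrier R" and a: "a \<in> carrier N"
  shows "r \<odot>\<^bsub>quot_mod N A\<^esub> (A +> a) = A +> (r \<odot> a)"
proof -
  have AC: "A \<subseteq> carrier N" using submodD(1)[OF A] .
  have "A <+> smult N r ` (A +> a) \<subseteq> A +> (r \<odot> a)"
  proof
    fix x assume "x \<in> A <+> smult N r ` (A +> a)"
    then obtain h k where hk: "h \<in> A" "k \<in> A" "x = h \<oplus> r \<odot> (k \<oplus> a)"
      by (auto simp: set_add_mem rcos_mem)
    then have "x = (h \<oplus> r \<odot> k) \<oplus> r \<odot> a"
      using AC r a by (simp add: subset_iff smult_add_right a_assoc)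
    moreover have "h \<oplus> r \<odot> k \<in> A" using hk r A by (auto dest: submodD(3,5))
    ultimately show "x \<in> A +> (r \<odot> a)" by (auto simp: rcos_mem)
  qed
  moreover have "A +> (r \<odot> a) \<subseteq> A <+> smult N r ` (A +> a)"
  proof
    fix x assume "x \<in> A +> (r \<odot> a)"
    then obtain h where "h \<in> A" "x = h \<oplus> r \<odot> (\<zero> \<oplus> a)" using a by (auto simp: rcos_mem)
    moreover have "\<zero> \<oplus> a \<in> A +> a" using submodD(2)[OF A] by (auto simp: rcos_mem)
    ultimately show "x \<in> A <+> smult N r ` (A +> a)" by (auto simp: set_add_mem)
  qed
  ultimately show ?thesis by (simp add: quot_mod_simps)
qed

lemma quot_image_submod:
  assumes A: "submod R N A" and K: "submod R N K"
  shows "submod R (quot_mod N A) (quot_image N A K)"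
proof -
  interpret abelian_subgroup A N using submod_abelian_subgroup[OF A] .
  have KC: "K \<subseteq> carrier N" using submodD(1)[OF K] .
  have "quot_image N A K \<subseteq> carrier (quot_mod N A)"
    using KC by (rule quot_image_carrier)
  moreover have "\<zero>\<^bsub>quot_mod N A\<^esub> \<in> quot_image N A K"
    using submodD(2)[OF K] a_rcos_const[OF submodD(2)[OF A]]
    by (force simp: quot_image_def quot_mod_simps)
  moreover have "C \<oplus>\<^bsub>quot_mod N A\<^esub> D \<in> quot_image N A K"
    if "C \<in> quot_image N A K" "D \<in> quot_image N A K" for C D
    using that KC submodD(3)[OF K]
    by (force simp: quot_image_def quot_mod_simps a_rcos_sum subset_iff)
  moreover have "\<ominus>\<^bsub>quot_mod N A\<^esub> C \<in> quot_image N A K" if "C \<in> quot_image N A K" for C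
    using that KC submodD(4)[OF K]
    by (force simp: quot_image_def quot_neg[OF A] subset_iff)
  moreover have "r \<odot>\<^bsub>quot_mod N A\<^esub> C \<in> quot_image N A K"
    if "r \<in> carrier R" "C \<in> quot_image N A K" for r C
    using that KC submodD(5)[OF K]
    by (force simp: quot_image_def quot_smult[OF A] subset_iff)
  ultimately show ?thesis unfolding submod_def by blast
qed

lemma quot_image_set_add:
  assumes A: "submod R N A" and "S \<subseteq> carrier N" "K \<subseteq> carrier N"
  shows "quot_image N A (S <+> K) = quot_image N A S <+>\<^bsub>quot_mod N A\<^esub> quot_image N A K"
proof -
  interpret abelian_subgroup A N using submod_abelian_subgroup[OF A] .
  have coset_sum: "(A +> s) \<oplus>\<^bsub>quot_mod N A\<^esub> (A +> k) = A +> (s \<oplus> k)" if "s \<in> S" "k \<in> K" for s k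
    using that assms(2,3) by (simp add: quot_mod_simps a_rcos_sum subsetD)
  show ?thesis
  proof
    show "quot_image N A (S <+> K) \<subseteq> quot_image N A S <+>\<^bsub>quot_mod N A\<^esub> quot_image N A K"
    proof
      fix C assume "C \<in> quot_image N A (S <+> K)"
      then obtain s k where sk: "s \<in> S" "k \<in> K" "C = A +> (s \<oplus> k)"
        by (auto simp: quot_image_def set_add_mem)
      then have "C = (A +> s) \<oplus>\<^bsub>quot_mod N A\<^esub> (A +> k)" using coset_sum by simp
      then show "C \<in> quot_image N A S <+>\<^bsub>quot_mod N A\<^esub> quot_image N A K"
        using sk unfolding quot_image_def by (blast intro: set_add_memI)
    qed
    show "quot_image N A S <+>\<^bsub>quot_mod N A\<^esub> quot_image N A K \<subseteq> quot_image N A (S <+> K)"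
      by (auto simp: quot_image_def set_add_mem coset_sum intro!: imageI)
  qed
qed

lemma quot_image_eq_carrier_iff:
  assumes A: "submod R N A" and KC: "K \<subseteq> carrier N"
  shows "quot_image N A K = carrier (quot_mod N A) \<longleftrightarrow> A <+> K = carrier N"
proof -
  interpret abelian_subgroup A N using submod_abelian_subgroup[OF A] .
  have image_sub: "quot_image N A K \<subseteq> carrier (quot_mod N A)"
    using KC by (rule quot_image_carrier)
  have sum_sub: "A <+> K \<subseteq> carrier N"
    using a_subset KC by (rule set_add_closed)
  show ?thesis
  proof
    assume full: "quot_image N A K = carrier (quot_mod N A)"
    show "A <+> K = carrier N"
    proof (rule equalityI[OF sum_sub], rule subsetI)
      fix x assume x: "x \<in> carrier N"
      then have "A +> x \<in> quot_image N A K" using full by (auto simp: quot_carrier_iff)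
      then obtain k where "k \<in> K" "A +> x = A +> k" by (auto simp: quot_image_def)
      then have "x \<in> A +> k" using a_rcos_self[OF x] by simp
      then show "x \<in> A <+> K" using \<open>k \<in> K\<close> by (auto simp: rcos_mem set_add_mem)
    qed
  next
    assume sum: "A <+> K = carrier N"
    show "quot_image N A K = carrier (quot_mod N A)"
    proof (rule equalityI[OF image_sub], rule subsetI)
      fix C assume "C \<in> carrier (quot_mod N A)"
      then obtain x where x: "x \<in> carrier N" "C = A +> x" by (auto simp: quot_carrier_iff)
      then have "x \<in> A <+> K" using sum by simp
      then obtain h k where hk: "h \<in> A" "k \<in> K" "x = h \<oplus> k" by (auto simp: set_add_mem)
      then have "C = A +> k"
        using x KC a_subset by (simp add: subset_iff a_coset_add_assoc[symmetric] a_rcos_const)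
      then show "C \<in> quot_image N A K" using hk by (auto simp: quot_image_def)
    qed
  qed
qed

lemma quot_preimage_submod:
  assumes A: "submod R N A" and L: "submod R (quot_mod N A) L"
  shows "submod R N (\<Union>L)"
proof -
  interpret abelian_subgroup A N using submod_abelian_subgroup[OF A] .
  have L_cosets: "L \<subseteq> carrier (quot_mod N A)" using submodD(1)[OF L] .
  have preimage_carrier: "\<Union>L \<subseteq> carrier N"
    using L_cosets a_rcosets_carrier by (auto simp: quot_mod_simps)
  have "\<zero> \<in> \<Union>L"
    using submodD(2)[OF L] by (auto simp: quot_mod_simps intro!: bexI[of _ A])
  moreover have "x \<oplus> y \<in> \<Union>L" if xy: "x \<in> \<Union>L" "y \<in> \<Union>L" for x y
  proof -
    obtain C D where CD: "C \<in> L" "D \<in> L" "x \<in> C" "y \<in> D" using xy by blast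
    then have "x \<oplus> y \<in> C \<oplus>\<^bsub>quot_mod N A\<^esub> D" by (simp add: quot_mod_simps set_add_memI)
    then show ?thesis using submodD(3)[OF L CD(1,2)] by blast
  qed
  moreover have "\<ominus> x \<in> \<Union>L" if x: "x \<in> \<Union>L" for x
  proof -
    obtain C where C: "C \<in> L" "x \<in> C" using x by blast
    then have "C \<in> carrier (quot_mod N A)" using L_cosets by blast
    then obtain c where c: "c \<in> carrier N" "C = A +> c" by (auto simp: quot_carrier_iff)
    have "\<ominus> x \<in> a_set_inv C" using C(2) by (auto simp: A_SET_INV_def')
    then have "\<ominus> x \<in> \<ominus>\<^bsub>quot_mod N A\<^esub> C" using c by (simp add: a_rcos_inv quot_neg[OF A])
    then show ?thesis using submodD(4)[OF L C(1)] by blast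
  qed
  moreover have "r \<odot> x \<in> \<Union>L" if r: "r \<in> carrier R" and x: "x \<in> \<Union>L" for r x
  proof -
    obtain C where C: "C \<in> L" "x \<in> C" using x by blast
    have "r \<odot> x = \<zero> \<oplus> r \<odot> x"
      using C preimage_carrier r by auto
    then have "r \<odot> x \<in> r \<odot>\<^bsub>quot_mod N A\<^esub> C"
      using C(2) by (auto simp: quot_mod_simps set_add_mem)
    then show ?thesis using submodD(5)[OF L r C(1)] by blast
  qed
  ultimately show ?thesis using preimage_carrier unfolding submod_def by blast
qed

lemma quot_image_preimage:
  assumes A: "submod R N A" and L: "L \<subseteq> carrier (quot_mod N A)"
  shows "quot_image N A (\<Union>L) = L"
proof -
  interpret abelian_subgroup A N using submod_abelian_subgroup[OF A] .
  show ?thesis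
  proof
    show "quot_image N A (\<Union>L) \<subseteq> L"
    proof
      fix C' assume "C' \<in> quot_image N A (\<Union>L)"
      then obtain C k where "C \<in> L" "k \<in> C" "C' = A +> k" by (auto simp: quot_image_def)
      moreover have "C \<in> carrier (quot_mod N A)" using L \<open>C \<in> L\<close> by blast
      then obtain c where "c \<in> carrier N" "C = A +> c" by (auto simp: quot_carrier_iff)
      ultimately show "C' \<in> L" using a_repr_independence' by simp
    qed
    show "L \<subseteq> quot_image N A (\<Union>L)"
    proof
      fix C assume "C \<in> L"
      then have "C \<in> carrier (quot_mod N A)" using L by blast
      then obtain c where "c \<in> carrier N" "C = A +> c" by (auto simp: quot_carrier_iff)
      then have "c \<in> \<Union>L" "C = A +> c" using \<open>C \<in> L\<close> a_rcos_self by auto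
      then show "C \<in> quot_image N A (\<Union>L)" by (auto simp: quot_image_def)
    qed
  qed
qed

lemma quot_image_supplement_iff:
  assumes A: "submod R N A" and S: "submod R N S" and AS: "A \<subseteq> S" and K: "submod R N K"
  shows "quot_image N A S <+>\<^bsub>quot_mod N A\<^esub> quot_image N A K = carrier (quot_mod N A) \<longleftrightarrow>
         S <+> K = carrier N"
proof -
  have SKC: "S <+> K \<subseteq> carrier N" using submodD(1)[OF submod_set_add[OF S K]] .
  have "A <+> (S <+> K) = (A <+> S) <+> K"
    using submodD(1)[OF A] submodD(1)[OF S] submodD(1)[OF K] by (simp add: set_add_assoc)
  also have "\<dots> = S <+> K"
    using set_add_absorb[OF S AS submodD(2)[OF A]] by simp
  finally have "A <+> (S <+> K) = S <+> K" .
  moreover have "quot_image N A S <+>\<^bsub>quot_mod N A\<^esub> quot_image N A K = quot_image N A (S <+> K)"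
    using quot_image_set_add[OF A submodD(1)[OF S] submodD(1)[OF K]] by simp
  ultimately show ?thesis
    using quot_image_eq_carrier_iff[OF A SKC] by simp
qed

lemma small_quot_iff:
  assumes A: "submod R N A" and S: "submod R N S" and AS: "A \<subseteq> S"
  shows "small_in R (quot_mod N A) (quot_image N A S) \<longleftrightarrow>
         (\<forall>K. submod R N K \<longrightarrow> S <+> K = carrier N \<longrightarrow> A <+> K = carrier N)"
proof
  assume small: "small_in R (quot_mod N A) (quot_image N A S)"
  show "\<forall>K. submod R N K \<longrightarrow> S <+> K = carrier N \<longrightarrow> A <+> K = carrier N"
  proof (intro allI impI)
    fix K assume K: "submod R N K" and SK: "S <+> K = carrier N"
    then have "quot_image N A K = carrier (quot_mod N A)"
      using small quot_image_submod[OF A K] quot_image_supplement_iff[OF A S AS K]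
      unfolding small_in_def by blast
    then show "A <+> K = carrier N" using quot_image_eq_carrier_iff[OF A submodD(1)[OF K]] by simp
  qed
next
  assume supp: "\<forall>K. submod R N K \<longrightarrow> S <+> K = carrier N \<longrightarrow> A <+> K = carrier N"
  show "small_in R (quot_mod N A) (quot_image N A S)"
    unfolding small_in_def
  proof (intro conjI allI impI)
    show "submod R (quot_mod N A) (quot_image N A S)" by (rule quot_image_submod[OF A S])
    fix L assume L: "submod R (quot_mod N A) L"
      and SL: "quot_image N A S <+>\<^bsub>quot_mod N A\<^esub> L = carrier (quot_mod N A)"
    have K: "submod R N (\<Union>L)" by (rule quot_preimage_submod[OF A L])
    have image: "quot_image N A (\<Union>L) = L" by (rule quot_image_preimage[OF A submodD(1)[OF L]])
    have "S <+> \<Union>L = carrier N" using SL quot_image_supplement_iff[OF A S AS K] image by simp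
    then have "A <+> \<Union>L = carrier N" using supp K by blast
    then show "L = carrier (quot_mod N A)"
      using quot_image_eq_carrier_iff[OF A submodD(1)[OF K]] image by simp
  qed
qed

lemma beta_star_iff:
  assumes U: "submod R N U" and V: "submod R N V"
  shows "beta_star R N U V \<longleftrightarrow>
         (\<forall>K. submod R N K \<longrightarrow> (U <+> K = carrier N \<longleftrightarrow> V <+> K = carrier N))"
    (is "_ \<longleftrightarrow> ?same")
proof -
  have UV: "submod R N (U <+> V)" by (rule submod_set_add[OF U V])
  have UC: "U \<subseteq> carrier N" and VC: "V \<subseteq> carrier N" using submodD(1) U V by auto
  have U_sub: "U \<subseteq> U <+> V" by (rule subset_set_add[OF V UC])
  have V_sub: "V \<subseteq> U <+> V"
    using subset_set_add[OF U VC] set_add_commute[OF UC VC] by simp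
  let ?common = "\<forall>K. submod R N K \<longrightarrow> (U <+> V) <+> K = carrier N \<longrightarrow>
      U <+> K = carrier N \<and> V <+> K = carrier N"
  have "beta_star R N U V \<longleftrightarrow> ?common"
    unfolding beta_star_def small_quot_iff[OF U UV U_sub] small_quot_iff[OF V UV V_sub] by blast
  moreover have "?same" if common: ?common
  proof (intro allI impI)
    fix K assume K: "submod R N K"
    have KC: "K \<subseteq> carrier N" using submodD(1)[OF K] .
    have enlarge: "(U <+> V) <+> K = carrier N" if ZK: "Z <+> K = carrier N" and Z: "Z \<subseteq> U <+> V"
      for Z
    proof
      show "(U <+> V) <+> K \<subseteq> carrier N" by (intro set_add_closed UC VC KC)
      show "carrier N \<subseteq> (U <+> V) <+> K"
        using set_add_mono[OF Z subset_refl, where B = K and G = N] ZK by simp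
    qed
    show "U <+> K = carrier N \<longleftrightarrow> V <+> K = carrier N"
      using common[rule_format, OF K] enlarge[OF _ U_sub] enlarge[OF _ V_sub] by blast
  qed
  moreover have ?common if same: ?same
  proof (intro allI impI)
    fix K assume K: "submod R N K" and UVK: "(U <+> V) <+> K = carrier N"
    have KC: "K \<subseteq> carrier N" using submodD(1)[OF K] .
    have VK: "submod R N (V <+> K)" by (rule submod_set_add[OF V K])
    have "V <+> (V <+> K) = V <+> K"
      using set_add_absorb[OF VK subset_set_add[OF K VC] submodD(2)[OF V]] .
    moreover have "U <+> (V <+> K) = carrier N"
      using UVK by (simp add: set_add_assoc UC VC KC)
    ultimately have "V <+> K = carrier N" using same VK by simp
    then show "U <+> K = carrier N \<and> V <+> K = carrier N" using same K by blast
  qed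
  ultimately show ?thesis by blast
qed

lemma cyclic_submod:
  assumes x: "x \<in> carrier N"
  shows "submod R N (cyclic_sub R N x)"
proof -
  have "cyclic_sub R N x \<subseteq> carrier N" using x by (auto simp: cyclic_sub_def)
  moreover have "\<zero> \<in> cyclic_sub R N x"
    using x smult_zero by (force simp: cyclic_sub_def)
  moreover have "r \<odot> x \<oplus> s \<odot> x \<in> cyclic_sub R N x" if "r \<in> carrier R" "s \<in> carrier R" for r s
    using that x by (force simp: cyclic_sub_def smult_add_left[symmetric])
  moreover have "\<ominus> (r \<odot> x) \<in> cyclic_sub R N x" if "r \<in> carrier R" for r
    using that x by (force simp: cyclic_sub_def smult_neg[symmetric])
  moreover have "s \<odot> (r \<odot> x) \<in> cyclic_sub R N x" if "r \<in> carrier R" "s \<in> carrier R" for r s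
    using that x by (force simp: cyclic_sub_def smult_assoc[symmetric])
  ultimately show ?thesis unfolding submod_def by (auto simp: cyclic_sub_def)
qed

lemma cyclic_self: "x \<in> carrier N \<Longrightarrow> x \<in> cyclic_sub R N x"
  by (force simp: cyclic_sub_def)

lemma cyclic_least: "submod R N K \<Longrightarrow> x \<in> K \<Longrightarrow> cyclic_sub R N x \<subseteq> K"
  by (auto simp: cyclic_sub_def dest: submodD(5))

lemma restrict_module:
  assumes S: "submod R N S"
  shows "right_module R (N\<lparr>carrier := S\<rparr>)"
proof -
  have SC: "S \<subseteq> carrier N" using submodD(1)[OF S] .
  have "abelian_group (N\<lparr>carrier := S\<rparr>)"
  proof (rule abelian_groupI)
    fix x assume "x \<in> carrier (N\<lparr>carrier := S\<rparr>)"
    then show "\<exists>y\<in>carrier (N\<lparr>carrier := S\<rparr>). y \<oplus>\<^bsub>N\<lparr>carrier := S\<rparr>\<^esub> x = \<zero>\<^bsub>N\<lparr>carrier := S\<rparr>\<^esub>"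
      using SC submodD(4)[OF S] by (force intro: l_neg)
  qed (use SC submodD[OF S] in \<open>auto simp: a_ac subset_iff\<close>)
  then show ?thesis
    unfolding right_module_def rmodule_def
    using SC submodD(5)[OF S] R.ring_axioms
    by (auto simp: subset_iff smult_add_right smult_add_left smult_assoc)
qed

lemma restrict_neg:
  assumes S: "submod R N S" and x: "x \<in> S"
  shows "\<ominus>\<^bsub>N\<lparr>carrier := S\<rparr>\<^esub> x = \<ominus> x"
proof -
  interpret S: right_module R "N\<lparr>carrier := S\<rparr>" by (rule restrict_module[OF S])
  show ?thesis
    using S.minus_equality[of "\<ominus> x" x] x submodD(1,4)[OF S] by (auto simp: l_neg)
qed

lemma submod_restrict_iff:
  assumes S: "submod R N S"
  shows "submod R (N\<lparr>carrier := S\<rparr>) K \<longleftrightarrow> submod R N K \<and> K \<subseteq> S"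
  using submodD(1)[OF S] restrict_neg[OF S] unfolding submod_def by (auto simp: subset_iff)

lemma direct_summand_restrict_iff:
  assumes S: "submod R N S"
  shows "direct_summand R (N\<lparr>carrier := S\<rparr>) D \<longleftrightarrow>
         submod R N D \<and> D \<subseteq> S \<and>
         (\<exists>D'. submod R N D' \<and> D' \<subseteq> S \<and> D <+> D' = S \<and> D \<inter> D' = {\<zero>})"
  unfolding direct_summand_def submod_restrict_iff[OF S] set_add_restrict by auto

lemma beta_star_restrict_iff:
  assumes S: "submod R N S"
    and U: "submod R N U" "U \<subseteq> S" and V: "submod R N V" "V \<subseteq> S"
  shows "beta_star R (N\<lparr>carrier := S\<rparr>) U V \<longleftrightarrow>
         (\<forall>K. submod R N K \<and> K \<subseteq> S \<longrightarrow> (U <+> K = S \<longleftrightarrow> V <+> K = S))"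
proof -
  interpret S: right_module R "N\<lparr>carrier := S\<rparr>" by (rule restrict_module[OF S])
  have "submod R (N\<lparr>carrier := S\<rparr>) U" "submod R (N\<lparr>carrier := S\<rparr>) V"
    using U V by (simp_all add: submod_restrict_iff[OF S])
  then show ?thesis
    by (simp add: S.beta_star_iff submod_restrict_iff[OF S] set_add_restrict)
qed

end

locale internal_direct_sum = right_module R M
  for R :: "('a, 'c) ring_scheme" and M :: "('a, 'm) module" (structure) +
  fixes M1 M2 :: "'m set"
  assumes submod1: "submod R M M1" and submod2: "submod R M M2"
    and covers: "M1 <+> M2 = carrier M" and disjoint: "M1 \<inter> M2 = {\<zero>}"
begin

lemma swap: "internal_direct_sum R M M2 M1"
  using submod1 submod2 covers disjoint submodD(1)[OF submod1] submodD(1)[OF submod2]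
  by unfold_locales (auto simp: set_add_commute)

lemma decompose:
  assumes "x \<in> carrier M" obtains a b where "a \<in> M1" "b \<in> M2" "x = a \<oplus> b"
proof -
  have "x \<in> M1 <+> M2" using assms covers by simp
  then show thesis using that by (auto simp: set_add_mem)
qed

lemma decompose_unique:
  assumes a: "a \<in> M1" "a' \<in> M1" and b: "b \<in> M2" "b' \<in> M2" and eq: "a \<oplus> b = a' \<oplus> b'"
  shows "a = a'" "b = b'"
proof -
  have carr: "a \<in> carrier M" "a' \<in> carrier M" "b \<in> carrier M" "b' \<in> carrier M"
    using a b submodD(1)[OF submod1] submodD(1)[OF submod2] by auto
  define c where "c = \<ominus> a' \<oplus> a"
  have c_carr: "c \<in> carrier M" using carr by (simp add: c_def)
  have "c \<in> M1" using a submodD(3,4)[OF submod1] by (simp add: c_def)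
  have "c \<oplus> b = \<ominus> a' \<oplus> (a' \<oplus> b')" using carr eq by (simp add: c_def a_assoc)
  then have cb: "c \<oplus> b = b'" using carr by (simp add: r_neg1)
  then have "c = b' \<oplus> \<ominus> b" using carr c_carr add.inv_solve_right by blast
  then have "c \<in> M2" using b submodD(3,4)[OF submod2] by simp
  with \<open>c \<in> M1\<close> have "c = \<zero>" using disjoint by auto
  then show "b = b'" using cb carr by simp
  have "a = a' \<oplus> c" using carr add.inv_solve_left[of c a' a] by (simp add: c_def)
  then show "a = a'" using \<open>c = \<zero>\<close> carr by simp
qed

lemma sum_eq_carrier_iff:
  assumes A1: "A1 \<subseteq> M1" and A2: "A2 \<subseteq> M2"
  shows "A1 <+> A2 = carrier M \<longleftrightarrow> A1 = M1 \<and> A2 = M2"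
proof
  assume full: "A1 <+> A2 = carrier M"
  have "x \<in> A1 \<and> y \<in> A2" if "x \<in> M1" "y \<in> M2" for x y
  proof -
    have "x \<oplus> y \<in> A1 <+> A2"
      using full that submodD(1)[OF submod1] submodD(1)[OF submod2] by auto
    then obtain a1 a2 where "a1 \<in> A1" "a2 \<in> A2" "x \<oplus> y = a1 \<oplus> a2" by (auto simp: set_add_mem)
    then show ?thesis using decompose_unique[of x a1 y a2] that A1 A2 by auto
  qed
  then show "A1 = M1 \<and> A2 = M2"
    using A1 A2 submodD(2)[OF submod1] submodD(2)[OF submod2] by blast
qed (use covers in simp)

lemma sum_eq_carrier_componentwise:
  assumes "A1 \<subseteq> M1" "K1 \<subseteq> M1" "A2 \<subseteq> M2" "K2 \<subseteq> M2"
  shows "(A1 <+> A2) <+> (K1 <+> K2) = carrier M \<longleftrightarrow> A1 <+> K1 = M1 \<and> A2 <+> K2 = M2"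
proof -
  have "(A1 <+> A2) <+> (K1 <+> K2) = (A1 <+> K1) <+> (A2 <+> K2)"
    using assms submodD(1)[OF submod1] submodD(1)[OF submod2] by (intro set_add_interchange) auto
  moreover have "A1 <+> K1 \<subseteq> M1" "A2 <+> K2 \<subseteq> M2"
    using assms by (simp_all add: set_add_subset submod1 submod2)
  ultimately show ?thesis by (simp add: sum_eq_carrier_iff)
qed

lemma split_if_covered:
  assumes N: "submod R M N" and cover: "N \<subseteq> (N \<inter> M1) <+> (N \<inter> M2)"
  shows "N = (N \<inter> M1) <+> (N \<inter> M2)"
  using cover set_add_subset[OF N] by blast

definition proj1 :: "'m \<Rightarrow> 'm" where
  "proj1 x = (THE a. a \<in> M1 \<and> (\<exists>b\<in>M2. x = a \<oplus> b))"

lemma proj1_eq: "a \<in> M1 \<Longrightarrow> b \<in> M2 \<Longrightarrow> proj1 (a \<oplus> b) = a"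
  unfolding proj1_def by (rule the_equality) (auto dest: decompose_unique)

lemma proj1_End: "proj1 \<in> End_mod R M"
proof -
  have M1C: "M1 \<subseteq> carrier M" and M2C: "M2 \<subseteq> carrier M"
    using submodD(1) submod1 submod2 by auto
  have "proj1 x \<in> carrier M" if x: "x \<in> carrier M" for x
  proof -
    obtain a b where "a \<in> M1" "b \<in> M2" "x = a \<oplus> b" using decompose[OF x] .
    then show ?thesis using M1C by (auto simp: proj1_eq)
  qed
  moreover have "proj1 (x \<oplus> y) = proj1 x \<oplus> proj1 y" if x: "x \<in> carrier M" and y: "y \<in> carrier M" for x y
  proof -
    obtain a b where "a \<in> M1" "b \<in> M2" "x = a \<oplus> b" using decompose[OF x] .
    moreover obtain c d where "c \<in> M1" "d \<in> M2" "y = c \<oplus> d" using decompose[OF y] .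
    moreover from calculation have "x \<oplus> y = (a \<oplus> c) \<oplus> (b \<oplus> d)"
      using M1C M2C by (simp add: subset_iff a_ac)
    ultimately show ?thesis
      using submodD(3)[OF submod1] submodD(3)[OF submod2] by (simp add: proj1_eq)
  qed
  moreover have "proj1 (r \<odot> x) = r \<odot> proj1 x" if r: "r \<in> carrier R" and x: "x \<in> carrier M" for r x
  proof -
    obtain a b where "a \<in> M1" "b \<in> M2" "x = a \<oplus> b" using decompose[OF x] .
    moreover from this have "r \<odot> x = r \<odot> a \<oplus> r \<odot> b"
      using M1C M2C r by (simp add: subset_iff smult_add_right)
    ultimately show ?thesis
      using submodD(5)[OF submod1 r] submodD(5)[OF submod2 r] by (simp add: proj1_eq)
  qed
  ultimately show ?thesis unfolding End_mod_def by blast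
qed

text \<open>In a duo module every submodule \<open>N\<close> is invariant under \<open>proj1\<close>, hence splits
  along the decomposition.\<close>
lemma duo_splits:
  assumes duo: "duo_module R M" and N: "submod R M N"
  shows "N = (N \<inter> M1) <+> (N \<inter> M2)"
proof (rule split_if_covered[OF N], rule subsetI)
  fix x assume x: "x \<in> N"
  then have "x \<in> carrier M" using submodD(1)[OF N] by blast
  then obtain a b where ab: "a \<in> M1" "b \<in> M2" "x = a \<oplus> b" by (rule decompose)
  have "proj1 ` N \<subseteq> N"
    using duo N proj1_End unfolding duo_module_def fully_invariant_def by blast
  then have "a \<in> N" using x ab by (force simp: proj1_eq)
  moreover have "a \<in> carrier M" "b \<in> carrier M"
    using ab submodD(1)[OF submod1] submodD(1)[OF submod2] by auto
  then have "b = \<ominus> a \<oplus> x" using ab by (simp add: r_neg1)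
  then have "b \<in> N" using \<open>a \<in> N\<close> x submodD(3,4)[OF N] by simp
  ultimately show "x \<in> (N \<inter> M1) <+> (N \<inter> M2)" using ab by auto
qed

lemma distributive_splits:
  assumes dist: "distributive_module R M" and N: "submod R M N"
  shows "N = (N \<inter> M1) <+> (N \<inter> M2)"
proof (rule split_if_covered[OF N])
  have law: "A <+> (B \<inter> C) = (A <+> B) \<inter> (A <+> C)"
    if "submod R M A" "submod R M B" "submod R M C" for A B C
    using dist that unfolding distributive_module_def by blast
  have NC: "N \<subseteq> carrier M" and M1C: "M1 \<subseteq> carrier M" and M2C: "M2 \<subseteq> carrier M"
    using submodD(1) N submod1 submod2 by auto
  have N1: "submod R M (N \<inter> M1)" by (rule submod_Int[OF N submod1])
  have "N \<subseteq> M2 <+> N"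
    using subset_set_add[OF submod2 NC] set_add_commute[OF M2C NC] by simp
  moreover have "M2 <+> M1 = carrier M" using covers set_add_commute[OF M1C M2C] by simp
  ultimately have "N \<subseteq> M2 <+> (N \<inter> M1)"
    using law[OF submod2 N submod1] NC by auto
  then have "N \<subseteq> (N \<inter> M1) <+> M2"
    using set_add_commute[OF M2C, of "N \<inter> M1"] NC by auto
  moreover have "(N \<inter> M1) <+> (N \<inter> M2) = ((N \<inter> M1) <+> N) \<inter> ((N \<inter> M1) <+> M2)"
    by (rule law[OF N1 N submod2])
  moreover have "(N \<inter> M1) <+> N = N"
    using set_add_absorb[OF N] submodD(2)[OF N1] by blast
  ultimately show "N \<subseteq> (N \<inter> M1) <+> (N \<inter> M2)" by simp
qed

lemma direct_summand_sum:
  assumes D1: "direct_summand R (M\<lparr>carrier := M1\<rparr>) D1"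
    and D2: "direct_summand R (M\<lparr>carrier := M2\<rparr>) D2"
  shows "direct_summand R M (D1 <+> D2)"
proof -
  obtain E1 where D1E1: "submod R M D1" "D1 \<subseteq> M1" "submod R M E1" "E1 \<subseteq> M1"
      "D1 <+> E1 = M1" "D1 \<inter> E1 = {\<zero>}"
    using D1 by (auto simp: direct_summand_restrict_iff[OF submod1])
  obtain E2 where D2E2: "submod R M D2" "D2 \<subseteq> M2" "submod R M E2" "E2 \<subseteq> M2"
      "D2 <+> E2 = M2" "D2 \<inter> E2 = {\<zero>}"
    using D2 by (auto simp: direct_summand_restrict_iff[OF submod2])
  have "(D1 <+> D2) <+> (E1 <+> E2) = carrier M"
    using D1E1 D2E2 by (simp add: sum_eq_carrier_componentwise)
  moreover have "y = \<zero>" if y: "y \<in> D1 <+> D2" "y \<in> E1 <+> E2" for y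
  proof -
    obtain d1 d2 e1 e2 where "d1 \<in> D1" "d2 \<in> D2" "e1 \<in> E1" "e2 \<in> E2"
      "y = d1 \<oplus> d2" "y = e1 \<oplus> e2"
      using y by (auto simp: set_add_mem)
    moreover from this have "d1 = e1" "d2 = e2"
      using decompose_unique[of d1 e1 d2 e2] D1E1(2,4) D2E2(2,4) by auto
    ultimately have "d1 = \<zero>" "d2 = \<zero>"
      using D1E1(6) D2E2(6) by blast+
    then show "y = \<zero>" using \<open>y = d1 \<oplus> d2\<close> by simp
  qed
  moreover have "\<zero> \<in> (D1 <+> D2) \<inter> (E1 <+> E2)"
    using submodD(2)[OF submod_set_add] D1E1(1,3) D2E2(1,3) by blast
  ultimately show ?thesis
    unfolding direct_summand_def
    using D1E1 D2E2 by (blast intro: submod_set_add)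
qed

end

text \<open>Direct sums \<open>M = M\<^sub>1 \<oplus> M\<^sub>2\<close> along which every submodule \<open>N\<close> splits as
  \<open>N = (N \<inter> M\<^sub>1) \<oplus> (N \<inter> M\<^sub>2)\<close>; by \<open>duo_splits\<close> and \<open>distributive_splits\<close> this holds
  in duo modules and in distributive modules.\<close>
locale splitting_direct_sum = internal_direct_sum +
  assumes splits: "submod R M N \<Longrightarrow> N = (N \<inter> M1) <+> (N \<inter> M2)"
begin

lemma splitting_swap: "splitting_direct_sum R M M2 M1"
proof -
  interpret M21: internal_direct_sum R M M2 M1 by (rule swap)
  show ?thesis
  proof
    fix N assume N: "submod R M N"
    have "N \<inter> M1 \<subseteq> carrier M" "N \<inter> M2 \<subseteq> carrier M" using submodD(1)[OF N] by auto
    then show "N = (N \<inter> M2) <+> (N \<inter> M1)" using splits[OF N] set_add_commute by metis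
  qed
qed

lemma supplement_split:
  assumes K: "submod R M K" and A: "A1 \<subseteq> M1" "A2 \<subseteq> M2"
  shows "(A1 <+> A2) <+> K = carrier M \<longleftrightarrow> A1 <+> (K \<inter> M1) = M1 \<and> A2 <+> (K \<inter> M2) = M2"
proof -
  have "(A1 <+> A2) <+> K = (A1 <+> A2) <+> ((K \<inter> M1) <+> (K \<inter> M2))"
    using splits[OF K] by (rule arg_cong)
  then show ?thesis using sum_eq_carrier_componentwise A by simp
qed

lemma supplement_part:
  assumes D: "submod R M D" and K: "K \<subseteq> M1"
  shows "D <+> (K <+> M2) = carrier M \<longleftrightarrow> (D \<inter> M1) <+> K = M1"
proof -
  have "D <+> (K <+> M2) = ((D \<inter> M1) <+> (D \<inter> M2)) <+> (K <+> M2)"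
    using splits[OF D] by (rule arg_cong)
  moreover have "(D \<inter> M2) <+> M2 = M2"
    using set_add_absorb[OF submod2 _ submodD(2)[OF submod_Int[OF D submod2]]] by blast
  ultimately show ?thesis
    using sum_eq_carrier_componentwise[of "D \<inter> M1" K "D \<inter> M2" M2] K by simp
qed

lemma direct_summand_part:
  assumes D: "submod R M D" and D': "submod R M D'"
    and DD': "D <+> D' = carrier M" "D \<inter> D' = {\<zero>}"
  shows "direct_summand R (M\<lparr>carrier := M1\<rparr>) (D \<inter> M1)"
proof -
  have "((D \<inter> M1) <+> (D \<inter> M2)) <+> ((D' \<inter> M1) <+> (D' \<inter> M2)) = carrier M"
    using DD'(1) splits[OF D, symmetric] splits[OF D', symmetric] by simp
  then have "(D \<inter> M1) <+> (D' \<inter> M1) = M1"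
    by (simp add: sum_eq_carrier_componentwise)
  moreover have "(D \<inter> M1) \<inter> (D' \<inter> M1) = {\<zero>}"
    using DD'(2) submodD(2)[OF submod1] by auto
  ultimately show ?thesis
    unfolding direct_summand_restrict_iff[OF submod1]
    using submod_Int[OF D submod1] submod_Int[OF D' submod1] by blast
qed

lemma cyclic_split:
  assumes x1: "x1 \<in> M1" and x2: "x2 \<in> M2"
  shows "cyclic_sub R M (x1 \<oplus> x2) = cyclic_sub R M x1 <+> cyclic_sub R M x2"
proof
  have carr: "x1 \<in> carrier M" "x2 \<in> carrier M"
    using x1 x2 submodD(1)[OF submod1] submodD(1)[OF submod2] by auto
  show "cyclic_sub R M (x1 \<oplus> x2) \<subseteq> cyclic_sub R M x1 <+> cyclic_sub R M x2"
    using carr by (auto simp: cyclic_sub_def smult_add_right intro!: set_add_memI)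
  let ?X = "cyclic_sub R M (x1 \<oplus> x2)"
  have X: "submod R M ?X" using carr by (simp add: cyclic_submod)
  then have "x1 \<oplus> x2 \<in> (?X \<inter> M1) <+> (?X \<inter> M2)"
    using splits[OF X] cyclic_self carr by auto
  then obtain a b where "a \<in> ?X \<inter> M1" "b \<in> ?X \<inter> M2" "x1 \<oplus> x2 = a \<oplus> b"
    by (auto simp: set_add_mem)
  then have "x1 \<in> ?X" "x2 \<in> ?X"
    using decompose_unique[of x1 a x2 b] x1 x2 by auto
  then show "cyclic_sub R M x1 <+> cyclic_sub R M x2 \<subseteq> ?X"
    using X by (simp add: set_add_subset cyclic_least)
qed

text \<open>For \<open>x \<in> M\<^sub>1\<close> choose a summand \<open>D\<close> of \<open>M\<close> with \<open>xR \<beta>\<^sup>* D\<close>; then \<open>D \<inter> M\<^sub>1\<close> works in \<open>M\<^sub>1\<close>,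
  because a submodule \<open>K \<subseteq> M\<^sub>1\<close> supplements a part of \<open>M\<^sub>1\<close> in \<open>M\<^sub>1\<close> exactly when \<open>K + M\<^sub>2\<close>
  supplements it in \<open>M\<close>.\<close>
lemma pgsl_summand:
  assumes pgsl: "principally_goldie_star_lifting R M"
  shows "principally_goldie_star_lifting R (M\<lparr>carrier := M1\<rparr>)"
  unfolding principally_goldie_star_lifting_def cyclic_sub_restrict
proof
  fix x assume "x \<in> carrier (M\<lparr>carrier := M1\<rparr>)"
  then have x: "x \<in> M1" and xC: "x \<in> carrier M" using submodD(1)[OF submod1] by auto
  let ?X = "cyclic_sub R M x"
  have X: "submod R M ?X" "?X \<subseteq> M1" using xC x by (simp_all add: cyclic_submod cyclic_least submod1)
  obtain D where "direct_summand R M D" and XD: "beta_star R M ?X D"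
    using pgsl xC unfolding principally_goldie_star_lifting_def by blast
  then obtain D' where D: "submod R M D" "submod R M D'" "D <+> D' = carrier M" "D \<inter> D' = {\<zero>}"
    unfolding direct_summand_def by blast
  let ?D1 = "D \<inter> M1"
  have same: "?X <+> K = carrier M \<longleftrightarrow> D <+> K = carrier M" if "submod R M K" for K
    using XD that by (simp add: beta_star_iff X(1) D(1))
  have "?X <+> K = M1 \<longleftrightarrow> ?D1 <+> K = M1" if K: "submod R M K" "K \<subseteq> M1" for K
  proof -
    have "?X \<inter> M1 = ?X" using X(2) by blast
    then have "?X <+> K = M1 \<longleftrightarrow> ?X <+> (K <+> M2) = carrier M"
      using supplement_part[OF X(1) K(2)] by simp
    also have "\<dots> \<longleftrightarrow> D <+> (K <+> M2) = carrier M"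
      using same submod_set_add[OF K(1) submod2] by blast
    also have "\<dots> \<longleftrightarrow> ?D1 <+> K = M1" by (rule supplement_part[OF D(1) K(2)])
    finally show ?thesis .
  qed
  then have "beta_star R (M\<lparr>carrier := M1\<rparr>) ?X ?D1"
    using X submod_Int[OF D(1) submod1]
    by (simp add: beta_star_restrict_iff[OF submod1])
  then show "\<exists>D. direct_summand R (M\<lparr>carrier := M1\<rparr>) D \<and> beta_star R (M\<lparr>carrier := M1\<rparr>) ?X D"
    using direct_summand_part[OF D] by blast
qed

text \<open>For \<open>x = x\<^sub>1 + x\<^sub>2\<close> take summands \<open>D\<^sub>i\<close> of \<open>M\<^sub>i\<close> with \<open>x\<^sub>iR \<beta>\<^sup>* D\<^sub>i\<close>; since \<open>xR = x\<^sub>1R + x\<^sub>2R\<close> and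
  every submodule splits, supplements of \<open>xR\<close> and of \<open>D\<^sub>1 + D\<^sub>2\<close> are compared componentwise.\<close>
lemma pgsl_of_summands:
  assumes pgsl1: "principally_goldie_star_lifting R (M\<lparr>carrier := M1\<rparr>)"
    and pgsl2: "principally_goldie_star_lifting R (M\<lparr>carrier := M2\<rparr>)"
  shows "principally_goldie_star_lifting R M"
  unfolding principally_goldie_star_lifting_def
proof
  fix x assume "x \<in> carrier M"
  then obtain x1 x2 where x12: "x1 \<in> M1" "x2 \<in> M2" "x = x1 \<oplus> x2" by (rule decompose)
  let ?X1 = "cyclic_sub R M x1" and ?X2 = "cyclic_sub R M x2"
  have X: "cyclic_sub R M x = ?X1 <+> ?X2" using cyclic_split x12 by simp
  have X1: "submod R M ?X1" "?X1 \<subseteq> M1" and X2: "submod R M ?X2" "?X2 \<subseteq> M2"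
    using x12 submodD(1)[OF submod1] submodD(1)[OF submod2]
    by (auto simp: cyclic_submod cyclic_least submod1 submod2)
  obtain D1 where D1: "direct_summand R (M\<lparr>carrier := M1\<rparr>) D1"
      and "beta_star R (M\<lparr>carrier := M1\<rparr>) ?X1 D1"
    using pgsl1 x12(1) unfolding principally_goldie_star_lifting_def cyclic_sub_restrict by auto
  moreover obtain D2 where D2: "direct_summand R (M\<lparr>carrier := M2\<rparr>) D2"
      and "beta_star R (M\<lparr>carrier := M2\<rparr>) ?X2 D2"
    using pgsl2 x12(2) unfolding principally_goldie_star_lifting_def cyclic_sub_restrict by auto
  moreover have D1': "submod R M D1" "D1 \<subseteq> M1" and D2': "submod R M D2" "D2 \<subseteq> M2"
    using D1 D2 by (auto simp: direct_summand_restrict_iff submod1 submod2)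
  ultimately have same1: "\<And>K. submod R M K \<Longrightarrow> K \<subseteq> M1 \<Longrightarrow> ?X1 <+> K = M1 \<longleftrightarrow> D1 <+> K = M1"
    and same2: "\<And>K. submod R M K \<Longrightarrow> K \<subseteq> M2 \<Longrightarrow> ?X2 <+> K = M2 \<longleftrightarrow> D2 <+> K = M2"
    using X1 X2 by (auto simp: beta_star_restrict_iff submod1 submod2)
  have "(?X1 <+> ?X2) <+> K = carrier M \<longleftrightarrow> (D1 <+> D2) <+> K = carrier M"
    if K: "submod R M K" for K
    using supplement_split[OF K X1(2) X2(2)] supplement_split[OF K D1'(2) D2'(2)]
      same1 same2 submod_Int[OF K submod1] submod_Int[OF K submod2] by simp
  then have "beta_star R M (cyclic_sub R M x) (D1 <+> D2)"
    using X X1(1) X2(1) D1'(1) D2'(1) by (simp add: beta_star_iff submod_set_add)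
  then show "\<exists>D. direct_summand R M D \<and> beta_star R M (cyclic_sub R M x) D"
    using direct_summand_sum[OF D1 D2] by blast
qed

end

theorem proposition3p8:
  fixes R :: "('a, 'c) ring_scheme" and M :: "('a, 'm) module" and M1 M2 :: "'m set"
  assumes "rmodule R M"
    and "submod R M M1" and "submod R M M2"
    and "M1 <+>\<^bsub>M\<^esub> M2 = carrier M" and "M1 \<inter> M2 = {\<zero>\<^bsub>M\<^esub>}"
    and "duo_module R M \<or> distributive_module R M"
  shows "principally_goldie_star_lifting R M \<longleftrightarrow>
           principally_goldie_star_lifting R (submodule_as_module M M1) \<and>
           principally_goldie_star_lifting R (submodule_as_module M M2)"
proof -
  interpret internal_direct_sum R M M1 M2
    using assms(1-5) by unfold_locales (simp_all add: right_module_def)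
  have "submod R M N \<Longrightarrow> N = (N \<inter> M1) <+>\<^bsub>M\<^esub> (N \<inter> M2)" for N
    using assms(6) duo_splits distributive_splits by blast
  then interpret splitting_direct_sum R M M1 M2 by unfold_locales
  interpret M21: splitting_direct_sum R M M2 M1 by (rule splitting_swap)
  show ?thesis using pgsl_summand M21.pgsl_summand pgsl_of_summands by blast
qed

end
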